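(* Let $C\ge 1$ and $t>0$. Suppose each of $C$ recruitment centres has been open for the same time $t$, so that $t_1=\dots=t_C=t$, and let $n_1,\dots,n_C$ be the observed recruitment counts, with $N_\bullet=\sum_{c=1}^C n_c$. Consider the log-likelihood (up to an additive constant) \[ \ell(\alpha,\beta)=C\alpha\log\beta-\sum_{c=1}^C(\alpha+n_c)\log(\beta+t_c)-C\log\Gamma(\alpha)+\sum_{c=1}^C\log\Gamma(\alpha+n_c),\qquad \alpha,\beta>0. \] Then the maximum likelihood estimator $(\widehat\alpha,\widehat\beta)$ maximising $\ell$ satisfies $\widehat\alpha/\widehat\beta=N_\bullet/(Ct)$.
   Context: This is the marginal log-likelihood of the Poisson–Gamma recruitment model: the centre rates $\lambda_1,\dots,\lambda_C$ are independent $\mathsf{Gam}(\alpha,\beta)$ (shape $\alpha$, rate $\beta$, density $\beta^\alpha\lambda^{\alpha-1}e^{-\beta\lambda}/\Gamma(\alpha)$), and given $\lambda_c$ the count $n_c$ at centre $c$ is Poisson with mean $\lambda_c t_c$, where $t_c$ is the time centre $c$ has been open. *)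

theory Defs
  imports "HOL-Analysis.Analysis"
begin

text \<open>Poisson-Gamma marginal log-likelihood (up to an additive constant), centres indexed 1..C,
  counts n c, opening times tt c.\<close>
definition loglik :: "nat \<Rightarrow> (nat \<Rightarrow> real) \<Rightarrow> (nat \<Rightarrow> nat) \<Rightarrow> real \<Rightarrow> real \<Rightarrow> real" where
  "loglik C tt n \<alpha> \<beta> =
     real C * \<alpha> * ln \<beta>
     - (\<Sum>c\<in>{1..C}. (\<alpha> + real (n c)) * ln (\<beta> + tt c))
     - real C * ln (Gamma \<alpha>)
     + (\<Sum>c\<in>{1..C}. ln (Gamma (\<alpha> + real (n c))))"

definition is_mle :: "nat \<Rightarrow> (nat \<Rightarrow> real) \<Rightarrow> (nat \<Rightarrow> nat) \<Rightarrow> real \<Rightarrow> real \<Rightarrow> bool" where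
  "is_mle C tt n a b \<longleftrightarrow> a > 0 \<and> b > 0 \<and>
     (\<forall>\<alpha> \<beta>. \<alpha> > 0 \<longrightarrow> \<beta> > 0 \<longrightarrow> loglik C tt n \<alpha> \<beta> \<le> loglik C tt n a b)"

end

(* With equal opening times, the log-likelihood depends on beta only through
   C a ln beta - (C a + N) ln (beta + t).  At the maximiser this profile is stationary in beta,
   and C a / b = (C a + N) / (b + t) rearranges to C a t = N b. *)
theory Submission
  imports Defs
begin

lemma loglik_equal_times:
  assumes "\<forall>c\<in>{1..C}. tt c = t"
  shows "loglik C tt n \<alpha> \<beta> =
           real C * \<alpha> * ln \<beta> - (real C * \<alpha> + real (\<Sum>c\<in>{1..C}. n c)) * ln (\<beta> + t)
           - real C * ln (Gamma \<alpha>) + (\<Sum>c\<in>{1..C}. ln (Gamma (\<alpha> + real (n c))))"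
proof -
  have "(\<Sum>c\<in>{1..C}. (\<alpha> + real (n c)) * ln (\<beta> + tt c)) = (\<Sum>c\<in>{1..C}. (\<alpha> + real (n c)) * ln (\<beta> + t))"
    using assms by (intro sum.cong) auto
  also have "\<dots> = (real C * \<alpha> + real (\<Sum>c\<in>{1..C}. n c)) * ln (\<beta> + t)"
    by (simp add: sum_distrib_right [symmetric] sum.distrib)
  finally show ?thesis
    unfolding loglik_def by simp
qed

lemma ln_profile_max_imp_stationary:
  fixes A B t b :: real
  assumes "b > 0" "t \<ge> 0"
    and max: "\<And>\<beta>. \<beta> > 0 \<Longrightarrow> A * ln \<beta> - B * ln (\<beta> + t) \<le> A * ln b - B * ln (b + t)"
  shows "A * t = (B - A) * b"
proof -
  have deriv: "((\<lambda>\<beta>. A * ln \<beta> - B * ln (\<beta> + t)) has_real_derivative A / b - B / (b + t)) (at b)"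
    using assms(1,2) by (auto intro!: derivative_eq_intros simp: field_simps)
  have "\<forall>y. \<bar>b - y\<bar> < b \<longrightarrow> A * ln y - B * ln (y + t) \<le> A * ln b - B * ln (b + t)"
    using max by auto
  then have "A / b - B / (b + t) = 0"
    by (rule DERIV_local_max[OF deriv assms(1)])
  then have "A / b = B / (b + t)"
    by simp
  moreover have "b + t > 0"
    using assms(1,2) by simp
  ultimately have "A * (b + t) = B * b"
    using assms(1) by (simp add: frac_eq_eq)
  then show ?thesis
    by (simp add: algebra_simps)
qed

theorem lemma1:
  fixes C :: nat and t :: real and tt :: "nat \<Rightarrow> real" and n :: "nat \<Rightarrow> nat" and a b :: real
  assumes "C \<ge> 1" and "t > 0"
    and "\<forall>c\<in>{1..C}. tt c = t"
    and "is_mle C tt n a b"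
  shows "a / b = real (\<Sum>c\<in>{1..C}. n c) / (real C * t)"
proof -
  define N where "N = real (\<Sum>c\<in>{1..C}. n c)"
  have "b > 0" and max: "\<And>\<beta>. \<beta> > 0 \<Longrightarrow> loglik C tt n a \<beta> \<le> loglik C tt n a b"
    using assms(4) unfolding is_mle_def by auto
  have "real C * a * ln \<beta> - (real C * a + N) * ln (\<beta> + t)
          \<le> real C * a * ln b - (real C * a + N) * ln (b + t)" if "\<beta> > 0" for \<beta>
    using max[OF that] unfolding loglik_equal_times[OF assms(3)] N_def by simp
  then have "real C * a * t = N * b"
    using ln_profile_max_imp_stationary[OF \<open>b > 0\<close>] assms(2) by force
  then show ?thesis
    using assms(1,2) \<open>b > 0\<close> unfolding N_def[symmetric] by (simp add: field_simps)
qed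

end
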